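(* Let $G$ be a pseudoforest and let $\tau=\tau_A$, $A=\binom{a\ b}{c\ d}$, be a nontrivial 2-switch on $G$. Suppose that either (i) $ab\in E(\operatorname{Forest}(G))$ and $cd\in E(\operatorname{Cycles}(G))$, or (ii) $ab,cd\in E(\operatorname{Cycles}(G))$. Then $\tau$ is a p-switch over $G$.
   Context: Graphs are finite, simple, undirected, labeled. A unicyclic graph is a connected graph with exactly one cycle; a pseudoforest is a graph each of whose components is a tree or a unicyclic graph. For vertices $a,b,c,d$, $A=\binom{a\ b}{c\ d}$ is interchangeable in $G$ if $ab,cd\in E(G)$, $\{a,b\}\cap\{c,d\}=\varnothing$, $ac,bd\notin E(G)$; the 2-switch $\tau_A$ sends $G$ to $G-ab-cd+ac+bd$ if $A$ is interchangeable and to $G$ otherwise (trivial). A nontrivial 2-switch $\tau$ over a pseudoforest $G$ is a p-switch if $\tau(G)$ is a pseudoforest. $\operatorname{Cycles}(H)$ is the subgraph induced by vertices lying on some cycle of $H$; $\operatorname{Forest}(H)=H-E(\operatorname{Cycles}(H))$. *)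

theory Defs
  imports Main
begin

type_synonym 'a graph = "'a set \<times> 'a set set"

definition verts :: "'a graph \<Rightarrow> 'a set" where "verts G = fst G"
definition edges :: "'a graph \<Rightarrow> 'a set set" where "edges G = snd G"

definition simple_graph :: "'a graph \<Rightarrow> bool" where
  "simple_graph G \<longleftrightarrow> finite (verts G) \<and>
     (\<forall>e\<in>edges G. card e = 2 \<and> e \<subseteq> verts G)"

definition adj :: "'a graph \<Rightarrow> 'a \<Rightarrow> 'a \<Rightarrow> bool" where
  "adj G u v \<longleftrightarrow> {u, v} \<in> edges G"

definition reachable :: "'a graph \<Rightarrow> 'a \<Rightarrow> 'a \<Rightarrow> bool" where
  "reachable G u v \<longleftrightarrow> u \<in> verts G \<and> (adj G)\<^sup>*\<^sup>* u v"

definition connected_graph :: "'a graph \<Rightarrow> bool" where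
  "connected_graph G \<longleftrightarrow> verts G \<noteq> {} \<and>
     (\<forall>u\<in>verts G. \<forall>v\<in>verts G. reachable G u v)"

definition induced :: "'a graph \<Rightarrow> 'a set \<Rightarrow> 'a graph" where
  "induced G S = (S, {e\<in>edges G. e \<subseteq> S})"

definition component :: "'a graph \<Rightarrow> 'a \<Rightarrow> 'a graph" where
  "component G v = induced G {u. reachable G v u}"

text \<open>A cycle is given by a list of at least 3 distinct vertices, consecutive ones
(cyclically) adjacent.  As a subgraph it is determined by its edge set.\<close>
definition is_cycle :: "'a graph \<Rightarrow> 'a list \<Rightarrow> bool" where
  "is_cycle G vs \<longleftrightarrow> length vs \<ge> 3 \<and> distinct vs \<and> set vs \<subseteq> verts G \<and>
     (\<forall>i<length vs. adj G (vs ! i) (vs ! ((i + 1) mod length vs)))"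

definition cycle_edges :: "'a list \<Rightarrow> 'a set set" where
  "cycle_edges vs = {{vs ! i, vs ! ((i + 1) mod length vs)} | i. i < length vs}"

definition cycles_of :: "'a graph \<Rightarrow> 'a set set set" where
  "cycles_of G = {cycle_edges vs | vs. is_cycle G vs}"

definition is_tree :: "'a graph \<Rightarrow> bool" where
  "is_tree G \<longleftrightarrow> connected_graph G \<and> cycles_of G = {}"

definition unicyclic :: "'a graph \<Rightarrow> bool" where
  "unicyclic G \<longleftrightarrow> connected_graph G \<and> card (cycles_of G) = 1"

definition pseudoforest :: "'a graph \<Rightarrow> bool" where
  "pseudoforest G \<longleftrightarrow> simple_graph G \<and>
     (\<forall>v\<in>verts G. is_tree (component G v) \<or> unicyclic (component G v))"

definition Cycles :: "'a graph \<Rightarrow> 'a graph" where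
  "Cycles H = induced H {v. \<exists>vs. is_cycle H vs \<and> v \<in> set vs}"

definition Forest :: "'a graph \<Rightarrow> 'a graph" where
  "Forest H = (verts H, edges H - edges (Cycles H))"

definition interchangeable :: "'a graph \<Rightarrow> 'a \<Rightarrow> 'a \<Rightarrow> 'a \<Rightarrow> 'a \<Rightarrow> bool" where
  "interchangeable G a b c d \<longleftrightarrow> {a, b} \<in> edges G \<and> {c, d} \<in> edges G \<and>
     {a, b} \<inter> {c, d} = {} \<and> {a, c} \<notin> edges G \<and> {b, d} \<notin> edges G"

definition two_switch :: "'a \<Rightarrow> 'a \<Rightarrow> 'a \<Rightarrow> 'a \<Rightarrow> 'a graph \<Rightarrow> 'a graph" where
  "two_switch a b c d G =
     (if interchangeable G a b c d
      then (verts G, (edges G - {{a, b}, {c, d}}) \<union> {{a, c}, {b, d}})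
      else G)"

definition p_switch :: "'a graph \<Rightarrow> 'a \<Rightarrow> 'a \<Rightarrow> 'a \<Rightarrow> 'a \<Rightarrow> bool" where
  "p_switch G a b c d \<longleftrightarrow> pseudoforest G \<and> interchangeable G a b c d \<and>
     pseudoforest (two_switch a b c d G)"

end

theory Submission
  imports Defs "HOL-Library.Transitive_Closure_Table"
begin

text \<open>
  Cycles are handled through their edges: an edge st of an edge set F lies on a cycle iff s and t
  stay linked in F without st.  A graph is a pseudoforest iff deleting any cycle edge st leaves
  the component of s without cycle edges.  This property survives deleting edges, and adding an
  edge xy whenever the component of x has no cycle edge.

  In both cases of the theorem the edge cd lies on a cycle: c and d lie on cycles, and the cycle
  in their common component is unique.  Nothing else is used about ab.  Deleting cd makes the
  component of c and d acyclic, so after deleting ab as well the edge ac can be added.  It remains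
  to see that b then lies in an acyclic component, or symmetrically that a does after adding bd
  instead.  If ab lies in the component of cd or on a cycle, then a and b are acyclic once ab and
  cd are deleted.  Otherwise ab is a bridge, and at most one of its two sides contains a cycle,
  because both sides lie in the same component of the pseudoforest.
\<close>

section \<open>Linkage and cycle edges in edge sets\<close>

definition linked :: "'a set set \<Rightarrow> 'a \<Rightarrow> 'a \<Rightarrow> bool" where
  "linked F = (\<lambda>x y. {x, y} \<in> F)\<^sup>*\<^sup>*"

definition on_cycle :: "'a set set \<Rightarrow> 'a \<Rightarrow> 'a \<Rightarrow> bool" where
  "on_cycle F s t \<longleftrightarrow> s \<noteq> t \<and> {s, t} \<in> F \<and> linked (F - {{s, t}}) s t"

lemma linked_refl [simp]: "linked F x x"
  by (simp add: linked_def)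

lemma linked_edge: "{x, y} \<in> F \<Longrightarrow> linked F x y"
  by (simp add: linked_def r_into_rtranclp)

lemma linked_trans: "linked F x y \<Longrightarrow> linked F y z \<Longrightarrow> linked F x z"
  unfolding linked_def by (rule rtranclp_trans)

lemma linked_sym: "linked F x y \<Longrightarrow> linked F y x"
  unfolding linked_def
proof (induction rule: rtranclp_induct)
  case (step y z)
  then have "{z, y} \<in> F" by (simp add: insert_commute)
  then show ?case using step.IH by (rule converse_rtranclp_into_rtranclp)
qed simp

lemma linked_mono:
  assumes "linked F x y" and "F \<subseteq> F'"
  shows "linked F' x y"
  using assms(1) unfolding linked_def
proof (induction rule: rtranclp_induct)
  case (step y z)
  with assms(2) show ?case by (simp add: rtranclp.rtrancl_into_rtrancl subset_iff)
qed simp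

lemma linked_insert_cases:
  assumes "linked (insert {x, y} F) u v"
  shows "linked F u v \<or> (linked F u x \<and> linked F y v) \<or> (linked F u y \<and> linked F x v)"
  using assms unfolding linked_def
proof (induction rule: rtranclp_induct)
  case (step w z)
  show ?case
  proof (cases "{w, z} \<in> F")
    case True
    with step.IH show ?thesis by (meson rtranclp.rtrancl_into_rtrancl)
  next
    case False
    with step.hyps(2) have "(w = x \<and> z = y) \<or> (w = y \<and> z = x)"
      by (auto simp: doubleton_eq_iff)
    with step.IH show ?thesis by auto
  qed
qed simp

lemma linked_Diff_far:
  assumes "linked F u v" and "\<not> linked F u s"
  shows "linked (F - {{s, t}}) u v"
  using assms unfolding linked_def
proof (induction rule: rtranclp_induct)
  case (step y z)
  have "{y, z} \<noteq> {s, t}"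
  proof
    assume "{y, z} = {s, t}"
    then have "y = s \<or> z = s" by auto
    then have "(\<lambda>x y. {x, y} \<in> F)\<^sup>*\<^sup>* u s"
      using step.hyps rtranclp.rtrancl_into_rtrancl[OF step.hyps] by blast
    with step.prems show False ..
  qed
  with step.hyps(2) have "{y, z} \<in> F - {{s, t}}" by simp
  with step.IH[OF step.prems] show ?case by (rule rtranclp.rtrancl_into_rtrancl)
qed simp

lemma on_cycle_mono: "on_cycle F s t \<Longrightarrow> F \<subseteq> F' \<Longrightarrow> on_cycle F' s t"
  unfolding on_cycle_def using linked_mono[of "F - {{s, t}}" s t "F' - {{s, t}}"] by blast

lemma on_cycle_sym: "on_cycle F s t \<Longrightarrow> on_cycle F t s"
  unfolding on_cycle_def by (auto simp: insert_commute intro: linked_sym)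

lemma linked_insert_redundant:
  assumes "linked F x y" and "linked (insert {x, y} F) u v"
  shows "linked F u v"
  using linked_insert_cases[OF assms(2)] assms(1) by (meson linked_sym linked_trans)

lemma on_cycle_linked_Diff_iff:
  assumes "on_cycle F s t"
  shows "linked (F - {{s, t}}) u v \<longleftrightarrow> linked F u v"
proof
  assume "linked F u v"
  moreover have "F = insert {s, t} (F - {{s, t}})"
    using assms by (auto simp: on_cycle_def)
  ultimately show "linked (F - {{s, t}}) u v"
    using assms linked_insert_redundant unfolding on_cycle_def by metis
qed (erule linked_mono, blast)

lemma on_cycle_Diff_far:
  assumes "on_cycle F p q" and "\<not> linked F p s"
  shows "on_cycle (F - {{s, t}}) p q"
proof -
  have "linked F p q"
    using assms(1) by (simp add: on_cycle_def linked_edge)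
  with assms(2) have "{p, q} \<noteq> {s, t}"
    by (auto simp: doubleton_eq_iff)
  moreover have "linked (F - {{p, q}} - {{s, t}}) p q"
  proof (rule linked_Diff_far)
    show "linked (F - {{p, q}}) p q"
      using assms(1) by (simp add: on_cycle_def)
    show "\<not> linked (F - {{p, q}}) p s"
      using assms(2) linked_mono[of "F - {{p, q}}" p s F] by blast
  qed
  moreover have "F - {{p, q}} - {{s, t}} = F - {{s, t}} - {{p, q}}"
    by blast
  ultimately show ?thesis
    using assms(1) by (simp add: on_cycle_def)
qed

lemma on_cycle_insert:
  assumes "on_cycle (insert {x, y} F) s t"
  shows "on_cycle F s t \<or> (linked F s x \<and> linked F x y)"
proof (cases "{s, t} = {x, y}")
  case True
  with assms have "linked (F - {{x, y}}) s t"
    by (simp add: on_cycle_def)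
  then have "linked F s t"
    by (rule linked_mono) blast
  with True show ?thesis
    by (auto simp: doubleton_eq_iff intro: linked_sym)
next
  case False
  with assms have st: "s \<noteq> t" "{s, t} \<in> F"
    and linked: "linked (insert {x, y} (F - {{s, t}})) s t"
    by (auto simp: on_cycle_def insert_Diff_if)
  consider "linked (F - {{s, t}}) s t"
    | "linked (F - {{s, t}}) s x" "linked (F - {{s, t}}) y t"
    | "linked (F - {{s, t}}) s y" "linked (F - {{s, t}}) x t"
    using linked_insert_cases[OF linked] by blast
  then show ?thesis
  proof cases
    case 1
    with st show ?thesis by (simp add: on_cycle_def)
  next
    case 2
    then have "linked F s x" "linked F y t"
      using linked_mono[of "F - {{s, t}}" _ _ F] by blast+
    with st show ?thesis by (meson linked_edge linked_sym linked_trans)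
  next
    case 3
    then have "linked F s y" "linked F x t"
      using linked_mono[of "F - {{s, t}}" _ _ F] by blast+
    with st show ?thesis by (meson linked_edge linked_sym linked_trans)
  qed
qed

section \<open>Pseudoforests as edge sets\<close>

definition acyclic_at :: "'a set set \<Rightarrow> 'a \<Rightarrow> bool" where
  "acyclic_at F x \<longleftrightarrow> (\<forall>s t. linked F x s \<longrightarrow> \<not> on_cycle F s t)"

definition pseudoforest_edges :: "'a set set \<Rightarrow> bool" where
  "pseudoforest_edges F \<longleftrightarrow> (\<forall>s t. on_cycle F s t \<longrightarrow> acyclic_at (F - {{s, t}}) s)"

lemma acyclic_at_mono:
  assumes "acyclic_at F x" and "F' \<subseteq> F"
  shows "acyclic_at F' x"
  using assms on_cycle_mono[of F' _ _ F] linked_mono[of F' x _ F]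
  unfolding acyclic_at_def by blast

lemma acyclic_at_linked:
  assumes "acyclic_at F x" and "linked F x y"
  shows "acyclic_at F y"
  unfolding acyclic_at_def
proof (intro allI impI)
  fix s t
  assume "linked F y s"
  with assms(2) have "linked F x s" by (rule linked_trans)
  with assms(1) show "\<not> on_cycle F s t" by (simp add: acyclic_at_def)
qed

lemma acyclic_at_insert:
  assumes z: "acyclic_at F z"
    and xy: "linked F z x \<or> linked F z y \<Longrightarrow>
      acyclic_at F x \<and> acyclic_at F y \<and> \<not> linked F x y"
  shows "acyclic_at (insert {x, y} F) z"
  unfolding acyclic_at_def
proof (intro allI impI notI)
  fix s t
  assume zs: "linked (insert {x, y} F) z s" and st: "on_cycle (insert {x, y} F) s t"
  show False
  proof (cases "linked F z x \<or> linked F z y")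
    case False
    then have zs': "linked F z s"
      using linked_insert_cases[OF zs] by blast
    from on_cycle_insert[OF st] show False
    proof
      assume "on_cycle F s t"
      with z zs' show False by (auto simp: acyclic_at_def)
    next
      assume "linked F s x \<and> linked F x y"
      with zs' False show False by (meson linked_trans)
    qed
  next
    case True
    with xy have x: "acyclic_at F x" and y: "acyclic_at F y" and nxy: "\<not> linked F x y"
      by simp_all
    from linked_insert_cases[OF zs] True have "linked F x s \<or> linked F y s"
      by (meson linked_sym linked_trans)
    with x y have "acyclic_at F s"
      by (metis acyclic_at_linked)
    then have "\<not> on_cycle F s t"
      by (simp add: acyclic_at_def)
    with nxy show False
      using on_cycle_insert[OF st] by blast
  qed
qed

lemma pseudoforest_edges_not_linked:
  assumes "pseudoforest_edges F" and "on_cycle F s t" and "on_cycle (F - {{s, t}}) p q"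
  shows "\<not> linked F s p"
proof -
  have "acyclic_at (F - {{s, t}}) s"
    using assms(1,2) by (simp add: pseudoforest_edges_def)
  with assms(3) have "\<not> linked (F - {{s, t}}) s p"
    by (auto simp: acyclic_at_def)
  then show ?thesis
    by (simp add: on_cycle_linked_Diff_iff[OF assms(2)])
qed

lemma pseudoforest_edges_mono:
  assumes "pseudoforest_edges F" and "F' \<subseteq> F"
  shows "pseudoforest_edges F'"
  unfolding pseudoforest_edges_def
proof (intro allI impI)
  fix s t
  assume "on_cycle F' s t"
  then have "on_cycle F s t"
    using assms(2) by (rule on_cycle_mono)
  with assms(1) have "acyclic_at (F - {{s, t}}) s"
    by (simp add: pseudoforest_edges_def)
  then show "acyclic_at (F' - {{s, t}}) s"
    by (rule acyclic_at_mono) (use assms(2) in blast)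
qed

lemma acyclic_at_insert_Diff_old_cycle:
  assumes PF: "pseudoforest_edges F" and x: "acyclic_at F x" and st: "on_cycle F s t"
  shows "acyclic_at (insert {x, y} F - {{s, t}}) s"
proof -
  let ?F0 = "F - {{s, t}}"
  have s: "acyclic_at ?F0 s"
    using PF st by (simp add: pseudoforest_edges_def)
  have xs: "\<not> linked F x s"
    using x st by (auto simp: acyclic_at_def)
  then have "{s, t} \<noteq> {x, y}"
    using st by (auto simp: doubleton_eq_iff on_cycle_def insert_commute linked_edge)
  then have eq: "insert {x, y} F - {{s, t}} = insert {x, y} ?F0"
    by auto
  have "acyclic_at (insert {x, y} ?F0) s"
  proof (rule acyclic_at_insert[OF s])
    assume "linked ?F0 s x \<or> linked ?F0 s y"
    with xs have sy: "linked ?F0 s y"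
      using linked_mono[of ?F0 s x F] by (meson Diff_subset linked_sym)
    have "\<not> linked ?F0 x y"
      using xs sy linked_mono[of ?F0 x s F] by (meson Diff_subset linked_sym linked_trans)
    with x sy s show "acyclic_at ?F0 x \<and> acyclic_at ?F0 y \<and> \<not> linked ?F0 x y"
      by (meson Diff_subset acyclic_at_linked acyclic_at_mono)
  qed
  with eq show ?thesis
    by simp
qed

lemma acyclic_at_insert_Diff_new_cycle:
  assumes x: "acyclic_at F x" and st: "on_cycle (insert {x, y} F) s t"
    and new: "\<not> on_cycle F s t"
  shows "acyclic_at (insert {x, y} F - {{s, t}}) s"
proof -
  let ?F0 = "F - {{s, t}}"
  from new on_cycle_insert[OF st] have sx: "linked F s x" and xy: "linked F x y"
    by auto
  have s: "acyclic_at F s"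
    using acyclic_at_linked[OF x linked_sym[OF sx]] .
  show ?thesis
  proof (cases "{s, t} = {x, y}")
    case True
    then have "insert {x, y} F - {{s, t}} \<subseteq> F"
      by auto
    with s show ?thesis
      by (rule acyclic_at_mono)
  next
    case False
    then have eq: "insert {x, y} F - {{s, t}} = insert {x, y} ?F0"
      by auto
    with st False have st': "s \<noteq> t" "{s, t} \<in> F" "linked (insert {x, y} ?F0) s t"
      by (auto simp: on_cycle_def)
    have y: "acyclic_at F y"
      using acyclic_at_linked[OF x xy] .
    have "\<not> linked ?F0 x y"
      using new st' linked_insert_redundant[of ?F0 x y s t] by (auto simp: on_cycle_def)
    moreover have "acyclic_at ?F0 s" "acyclic_at ?F0 x" "acyclic_at ?F0 y"
      using s x y acyclic_at_mono[of F _ ?F0] by blast+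
    ultimately have "acyclic_at (insert {x, y} ?F0) s"
      by (intro acyclic_at_insert) simp_all
    with eq show ?thesis
      by simp
  qed
qed

lemma pseudoforest_edges_insert:
  assumes PF: "pseudoforest_edges F" and x: "acyclic_at F x"
  shows "pseudoforest_edges (insert {x, y} F)"
  unfolding pseudoforest_edges_def
  using acyclic_at_insert_Diff_old_cycle[OF PF x] acyclic_at_insert_Diff_new_cycle[OF x]
  by blast

lemma pseudoforest_edges_bridge:
  assumes PF: "pseudoforest_edges F" and ab: "{a, b} \<in> F"
    and bridge: "\<not> linked (F - {{a, b}}) a b"
  shows "acyclic_at (F - {{a, b}}) a \<or> acyclic_at (F - {{a, b}}) b"
proof (rule ccontr)
  let ?G = "F - {{a, b}}"
  assume "\<not> ?thesis"
  then obtain s t p q where as: "linked ?G a s" and st: "on_cycle ?G s t"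
    and bp: "linked ?G b p" and pq: "on_cycle ?G p q"
    unfolding acyclic_at_def by blast
  have ps: "\<not> linked ?G p s" and bs: "\<not> linked ?G b s"
    using as bp bridge by (meson linked_sym linked_trans)+
  have st_F: "on_cycle F s t"
    using st by (rule on_cycle_mono) blast
  have sub: "?G - {{s, t}} \<subseteq> F - {{s, t}}"
    by blast
  have "linked (?G - {{s, t}}) s a"
    using as by (simp add: on_cycle_linked_Diff_iff[OF st] linked_sym)
  then have "linked (F - {{s, t}}) s a"
    using sub by (rule linked_mono)
  moreover have "{a, b} \<in> F - {{s, t}}"
    using ab st by (auto simp: on_cycle_def)
  moreover have "linked (F - {{s, t}}) b p"
    using linked_Diff_far[OF bp bs] sub by (rule linked_mono)
  ultimately have "linked (F - {{s, t}}) s p"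
    by (meson linked_edge linked_trans)
  moreover have "on_cycle (F - {{s, t}}) p q"
    using on_cycle_Diff_far[OF pq ps] sub by (rule on_cycle_mono)
  moreover have "acyclic_at (F - {{s, t}}) s"
    using PF st_F by (simp add: pseudoforest_edges_def)
  ultimately show False
    by (auto simp: acyclic_at_def)
qed

lemma acyclic_at_switch_Diff:
  assumes PF: "pseudoforest_edges E" and cd: "on_cycle E c d"
  shows "acyclic_at (E - {{a, b}, {c, d}}) c" and "acyclic_at (E - {{a, b}, {c, d}}) d"
proof -
  have sub: "E - {{a, b}, {c, d}} \<subseteq> E - {{c, d}}"
    by blast
  have c: "acyclic_at (E - {{c, d}}) c"
    using PF cd by (simp add: pseudoforest_edges_def)
  moreover have "linked (E - {{c, d}}) c d"
    using cd by (simp add: on_cycle_def)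
  ultimately have d: "acyclic_at (E - {{c, d}}) d"
    by (rule acyclic_at_linked)
  show "acyclic_at (E - {{a, b}, {c, d}}) c"
    using c sub by (rule acyclic_at_mono)
  show "acyclic_at (E - {{a, b}, {c, d}}) d"
    using d sub by (rule acyclic_at_mono)
qed

lemma switch_side_acyclic_same_component:
  assumes PF: "pseudoforest_edges E" and cd: "on_cycle E c d"
    and ab: "{a, b} \<in> E" "a \<noteq> b" "{a, b} \<noteq> {c, d}" and ca: "linked E c a"
  defines "F \<equiv> E - {{a, b}, {c, d}}"
  shows "acyclic_at (insert {a, c} F) b"
proof (rule acyclic_at_insert)
  let ?E1 = "E - {{c, d}}"
  have F: "F = ?E1 - {{a, b}}"
    by (auto simp: F_def)
  have "acyclic_at ?E1 c"
    using PF cd by (simp add: pseudoforest_edges_def)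
  moreover have "linked ?E1 c a"
    using ca by (simp add: on_cycle_linked_Diff_iff[OF cd])
  ultimately have a1: "acyclic_at ?E1 a"
    by (rule acyclic_at_linked)
  have ab1: "{a, b} \<in> ?E1"
    using ab by auto
  show "acyclic_at F b"
    using acyclic_at_linked[OF a1 linked_edge[OF ab1]] by (rule acyclic_at_mono) (simp add: F)
  assume b_ac: "linked F b a \<or> linked F b c"
  have "\<not> linked F a c"
  proof
    assume "linked F a c"
    with b_ac have "linked (?E1 - {{a, b}}) a b"
      unfolding F by (meson linked_sym linked_trans)
    with ab1 ab(2) have "on_cycle ?E1 a b"
      by (simp add: on_cycle_def)
    with a1 show False
      by (auto simp: acyclic_at_def)
  qed
  moreover have "acyclic_at F a"
    using a1 by (rule acyclic_at_mono) (simp add: F)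
  ultimately show "acyclic_at F a \<and> acyclic_at F c \<and> \<not> linked F a c"
    using acyclic_at_switch_Diff[OF PF cd] by (simp add: F_def)
qed

lemma switch_side_acyclic_cycle:
  assumes PF: "pseudoforest_edges E" and cd: "on_cycle E c d"
    and ab: "on_cycle E a b" and ca: "\<not> linked E c a"
  defines "F \<equiv> E - {{a, b}, {c, d}}"
  shows "acyclic_at (insert {a, c} F) b"
proof (rule acyclic_at_insert)
  let ?E2 = "E - {{a, b}}"
  have sub: "F \<subseteq> ?E2"
    by (auto simp: F_def)
  have a2: "acyclic_at ?E2 a"
    using PF ab by (simp add: pseudoforest_edges_def)
  moreover have "linked ?E2 a b"
    using ab by (simp add: on_cycle_def)
  ultimately have "acyclic_at ?E2 b"
    by (rule acyclic_at_linked)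
  then show "acyclic_at F b"
    using sub by (rule acyclic_at_mono)
  have "\<not> linked E a c"
    using ca by (meson linked_sym)
  then have "\<not> linked F a c"
    using linked_mono[of F a c E] by (auto simp: F_def)
  then show "acyclic_at F a \<and> acyclic_at F c \<and> \<not> linked F a c"
    using acyclic_at_mono[OF a2 sub] acyclic_at_switch_Diff(1)[OF PF cd] by (simp add: F_def)
qed

lemma switch_side_acyclic_bridge:
  assumes PF: "pseudoforest_edges E" and cd: "on_cycle E c d"
    and ab: "{a, b} \<in> E" "a \<noteq> b" and bridge: "\<not> on_cycle E a b" and ca: "\<not> linked E c a"
  defines "F \<equiv> E - {{a, b}, {c, d}}"
  shows "acyclic_at (insert {a, c} F) b \<or> acyclic_at (insert {b, d} F) a"
proof -
  let ?E2 = "E - {{a, b}}"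
  have sub: "F \<subseteq> ?E2" "F \<subseteq> E"
    by (auto simp: F_def)
  have "\<not> linked ?E2 a b"
    using ab bridge by (simp add: on_cycle_def)
  then have ab_F: "\<not> linked F a b" "\<not> linked F b a"
    using linked_mono[OF _ sub(1)] by (auto dest: linked_sym)
  have "linked E d c"
    using cd by (simp add: on_cycle_def linked_edge insert_commute)
  with ca ab(1) have "\<not> linked E b c" "\<not> linked E a d"
    by (meson linked_edge linked_sym linked_trans)+
  then have bc_F: "\<not> linked F b c" and ad_F: "\<not> linked F a d"
    using linked_mono[OF _ sub(2)] by blast+
  from pseudoforest_edges_bridge[OF PF ab(1) \<open>\<not> linked ?E2 a b\<close>] show ?thesis
  proof
    assume "acyclic_at ?E2 a"
    then have "acyclic_at (insert {b, d} F) a"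
      using ab_F ad_F by (intro acyclic_at_insert acyclic_at_mono[OF _ sub(1)]) auto
    then show ?thesis ..
  next
    assume "acyclic_at ?E2 b"
    then have "acyclic_at (insert {a, c} F) b"
      using ab_F bc_F by (intro acyclic_at_insert acyclic_at_mono[OF _ sub(1)]) auto
    then show ?thesis ..
  qed
qed

lemma pseudoforest_edges_switch:
  assumes PF: "pseudoforest_edges E" and cd: "on_cycle E c d"
    and ab: "{a, b} \<in> E" "a \<noteq> b" "{a, b} \<noteq> {c, d}"
  shows "pseudoforest_edges ((E - {{a, b}, {c, d}}) \<union> {{a, c}, {b, d}})"
proof -
  define F where "F = E - {{a, b}, {c, d}}"
  have PF_F: "pseudoforest_edges F"
    using PF by (rule pseudoforest_edges_mono) (auto simp: F_def)
  have c: "acyclic_at F c" and d: "acyclic_at F d"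
    unfolding F_def using acyclic_at_switch_Diff[OF PF cd] by simp_all
  have "acyclic_at (insert {a, c} F) b \<or> acyclic_at (insert {b, d} F) a"
    unfolding F_def
    using switch_side_acyclic_same_component[OF PF cd ab] switch_side_acyclic_cycle[OF PF cd]
      switch_side_acyclic_bridge[OF PF cd ab(1,2)]
    by blast
  then show ?thesis
  proof
    assume "acyclic_at (insert {a, c} F) b"
    moreover have "pseudoforest_edges (insert {a, c} F)"
      using pseudoforest_edges_insert[OF PF_F c, of a] by (simp add: insert_commute)
    ultimately have "pseudoforest_edges (insert {b, d} (insert {a, c} F))"
      by (rule pseudoforest_edges_insert[rotated])
    then show ?thesis
      by (simp add: F_def insert_commute)
  next
    assume "acyclic_at (insert {b, d} F) a"
    moreover have "pseudoforest_edges (insert {b, d} F)"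
      using pseudoforest_edges_insert[OF PF_F d, of b] by (simp add: insert_commute)
    ultimately have "pseudoforest_edges (insert {a, c} (insert {b, d} F))"
      by (rule pseudoforest_edges_insert[rotated])
    then show ?thesis
      by (simp add: F_def)
  qed
qed

section \<open>Cycles as vertex lists\<close>

lemma mod_add_neq_self:
  fixes i m n :: nat
  assumes "i < n" "0 < m" "m < n"
  shows "(i + m) mod n \<noteq> i"
  using assms by (simp add: mod_if, linarith)

lemma cycle_edges_subset: "is_cycle G vs \<Longrightarrow> cycle_edges vs \<subseteq> edges G"
  unfolding is_cycle_def cycle_edges_def adj_def by auto

lemma cycle_edge_in_cycle_edges:
  "i < length vs \<Longrightarrow> {vs ! i, vs ! ((i + 1) mod length vs)} \<in> cycle_edges vs"
  unfolding cycle_edges_def by blast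

lemma cycle_edge_inj:
  assumes cycle: "is_cycle G vs" and ij: "i < length vs" "j < length vs"
    and eq: "{vs ! i, vs ! ((i + 1) mod length vs)} = {vs ! j, vs ! ((j + 1) mod length vs)}"
  shows "i = j"
proof (rule ccontr)
  let ?n = "length vs"
  assume "i \<noteq> j"
  have n: "3 \<le> ?n" and dist: "distinct vs"
    using cycle by (auto simp: is_cycle_def)
  have next_lt: "(k + 1) mod ?n < ?n" for k
    using n by (intro mod_less_divisor) linarith
  have index_eq: "k < ?n \<Longrightarrow> l < ?n \<Longrightarrow> vs ! k = vs ! l \<longleftrightarrow> k = l" for k l
    by (rule nth_eq_iff_index_eq[OF dist])
  have "vs ! i \<noteq> vs ! j"
    using index_eq[OF ij] \<open>i \<noteq> j\<close> by simp
  with eq have "vs ! i = vs ! ((j + 1) mod ?n)" "vs ! ((i + 1) mod ?n) = vs ! j"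
    by (simp_all add: doubleton_eq_iff)
  then have i: "i = (j + 1) mod ?n" and j: "j = (i + 1) mod ?n"
    using index_eq ij next_lt by simp_all
  have "i = ((i + 1) mod ?n + 1) mod ?n"
    using i unfolding j .
  also have "\<dots> = (i + 2) mod ?n"
    by (simp add: mod_Suc_eq)
  finally have "(i + 2) mod ?n = i" ..
  with mod_add_neq_self[OF ij(1), of 2] n show False
    by simp
qed

lemma linked_cycle_walk:
  assumes cycle: "is_cycle G vs" and i: "i < length vs"
  shows "k < length vs \<Longrightarrow>
    linked (cycle_edges vs - {{vs ! i, vs ! ((i + 1) mod length vs)}})
      (vs ! ((i + 1) mod length vs)) (vs ! ((i + 1 + k) mod length vs))"
proof (induction k)
  case (Suc k)
  let ?n = "length vs"
  define j where "j = (i + 1 + k) mod ?n"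
  have j: "j < ?n"
    using Suc.prems unfolding j_def by (intro mod_less_divisor) linarith
  have next_j: "(j + 1) mod ?n = (i + 1 + Suc k) mod ?n"
    by (simp add: j_def mod_Suc_eq)
  have "j \<noteq> i"
    using mod_add_neq_self[OF i, of "Suc k"] Suc.prems by (simp add: j_def)
  then have "{vs ! j, vs ! ((j + 1) mod ?n)} \<noteq> {vs ! i, vs ! ((i + 1) mod ?n)}"
    using cycle_edge_inj[OF cycle j i] by blast
  with cycle_edge_in_cycle_edges[OF j]
  have "linked (cycle_edges vs - {{vs ! i, vs ! ((i + 1) mod ?n)}}) (vs ! j) (vs ! ((j + 1) mod ?n))"
    by (simp add: linked_edge)
  moreover have "linked (cycle_edges vs - {{vs ! i, vs ! ((i + 1) mod ?n)}})
      (vs ! ((i + 1) mod ?n)) (vs ! j)"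
    using Suc by (simp add: j_def)
  ultimately show ?case
    unfolding next_j by (rule linked_trans[rotated])
qed simp

lemma cycle_edge_on_cycle:
  assumes cycle: "is_cycle G vs" and f: "f \<in> cycle_edges vs" and sub: "cycle_edges vs \<subseteq> F"
  obtains s t where "f = {s, t}" "s \<in> set vs" "on_cycle F s t"
proof -
  let ?n = "length vs"
  obtain i where i: "i < ?n" and f_i: "f = {vs ! i, vs ! ((i + 1) mod ?n)}"
    using f by (auto simp: cycle_edges_def)
  have n: "3 \<le> ?n" and dist: "distinct vs"
    using cycle by (auto simp: is_cycle_def)
  have "i + 1 + (?n - 1) = i + ?n"
    using n by simp
  then have "(i + 1 + (?n - 1)) mod ?n = i"
    using i by simp
  then have "linked (cycle_edges vs - {f}) (vs ! ((i + 1) mod ?n)) (vs ! i)"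
    using linked_cycle_walk[OF cycle i, of "?n - 1"] n f_i by simp
  then have "linked (F - {f}) (vs ! i) (vs ! ((i + 1) mod ?n))"
    using sub by (meson Diff_mono linked_mono linked_sym order_refl)
  moreover have "vs ! i \<noteq> vs ! ((i + 1) mod ?n)"
  proof -
    have "(i + 1) mod ?n < ?n"
      using n by (intro mod_less_divisor) linarith
    with i have "vs ! i = vs ! ((i + 1) mod ?n) \<longleftrightarrow> i = (i + 1) mod ?n"
      by (rule nth_eq_iff_index_eq[OF dist])
    with mod_add_neq_self[OF i, of 1] n show ?thesis
      by auto
  qed
  moreover have "f \<in> F"
    using f sub by blast
  ultimately have "on_cycle F (vs ! i) (vs ! ((i + 1) mod ?n))"
    by (simp add: on_cycle_def f_i)
  with that f_i i show ?thesis
    by simp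
qed

lemma linked_cycle_vertices:
  assumes cycle: "is_cycle G vs" and xy: "x \<in> set vs" "y \<in> set vs"
  shows "linked (cycle_edges vs) x y"
proof -
  let ?n = "length vs"
  have n: "3 \<le> ?n"
    using cycle by (simp add: is_cycle_def)
  have from_hd: "linked (cycle_edges vs) (vs ! 0) (vs ! k)" if "k < ?n" for k
  proof -
    have last: "?n - 1 < ?n" and wrap: "?n - 1 + 1 = ?n"
      using n by simp_all
    have "linked (cycle_edges vs - {{vs ! (?n - 1), vs ! ((?n - 1 + 1) mod ?n)}})
        (vs ! ((?n - 1 + 1) mod ?n)) (vs ! ((?n - 1 + 1 + k) mod ?n))"
      by (rule linked_cycle_walk[OF cycle last that])
    then have "linked (cycle_edges vs - {{vs ! (?n - 1), vs ! 0}}) (vs ! 0) (vs ! k)"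
      using that unfolding wrap by simp
    then show ?thesis
      by (rule linked_mono) blast
  qed
  obtain k l where "k < ?n" "l < ?n" "x = vs ! k" "y = vs ! l"
    using xy by (metis in_set_conv_nth)
  with from_hd have "linked (cycle_edges vs) (vs ! 0) x" "linked (cycle_edges vs) (vs ! 0) y"
    by simp_all
  then show ?thesis
    using linked_sym linked_trans by metis
qed

lemma Union_cycle_edges:
  assumes "is_cycle G vs"
  shows "\<Union> (cycle_edges vs) = set vs"
proof
  have "3 \<le> length vs"
    using assms by (simp add: is_cycle_def)
  then have "vs ! ((i + 1) mod length vs) \<in> set vs" for i
    by (intro nth_mem mod_less_divisor) linarith
  then show "\<Union> (cycle_edges vs) \<subseteq> set vs"
    unfolding cycle_edges_def by auto
  show "set vs \<subseteq> \<Union> (cycle_edges vs)"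
  proof
    fix x
    assume "x \<in> set vs"
    then obtain i where "i < length vs" "x = vs ! i"
      by (metis in_set_conv_nth)
    then show "x \<in> \<Union> (cycle_edges vs)"
      using cycle_edge_in_cycle_edges[of i vs] by blast
  qed
qed

lemma is_cycle_closing_path:
  assumes G: "simple_graph G" and F: "F \<subseteq> edges G"
    and path: "rtrancl_path (\<lambda>x y. {x, y} \<in> F) v xs u" and dist: "distinct (v # xs)"
    and len: "2 \<le> length xs" and uv: "{u, v} \<in> F"
  shows "is_cycle G (v # xs)" "cycle_edges (v # xs) \<subseteq> F" "{u, v} \<in> cycle_edges (v # xs)"
proof -
  let ?vs = "v # xs" and ?n = "Suc (length xs)"
  have xs: "xs \<noteq> []"
    using len by auto
  have last: "?vs ! length xs = u"
    using rtrancl_path_last[OF path xs] xs by (simp add: last_conv_nth)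
  have edge: "{?vs ! i, ?vs ! ((i + 1) mod ?n)} \<in> F" if "i < ?n" for i
  proof (cases "i < length xs")
    case True
    then show ?thesis
      using rtrancl_path_nth[OF path True] by simp
  next
    case False
    with that have "i = length xs"
      by simp
    with last uv show ?thesis
      by (simp add: insert_commute)
  qed
  then show sub: "cycle_edges ?vs \<subseteq> F"
    by (auto simp: cycle_edges_def)
  have "set ?vs \<subseteq> verts G"
  proof
    fix w
    assume "w \<in> set ?vs"
    then obtain i where "i < ?n" "w = ?vs ! i"
      by (metis in_set_conv_nth length_Cons)
    with edge F G show "w \<in> verts G"
      unfolding simple_graph_def by blast
  qed
  with len dist edge F show "is_cycle G ?vs"
    by (auto simp: is_cycle_def adj_def)
  show "{u, v} \<in> cycle_edges ?vs"
    using cycle_edge_in_cycle_edges[of "length xs" ?vs] last by simp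
qed

lemma cycle_through_on_cycle:
  assumes G: "simple_graph G" and F: "F \<subseteq> edges G" and uv: "on_cycle F u v"
  obtains vs where "is_cycle G vs" "{u, v} \<in> cycle_edges vs" "cycle_edges vs \<subseteq> F"
proof -
  let ?F = "F - {{u, v}}"
  have "u \<noteq> v" "{u, v} \<in> F"
    using uv by (auto simp: on_cycle_def)
  have "linked ?F v u"
    using uv by (simp add: on_cycle_def linked_sym)
  then obtain xs0 where "rtrancl_path (\<lambda>x y. {x, y} \<in> ?F) v xs0 u"
    by (auto simp: linked_def rtranclp_eq_rtrancl_path)
  then obtain xs where path: "rtrancl_path (\<lambda>x y. {x, y} \<in> ?F) v xs u"
    and dist: "distinct (v # xs)"
    by (rule rtrancl_path_distinct)
  have "xs \<noteq> []"
    using path \<open>u \<noteq> v\<close> by (auto elim: rtrancl_path.cases)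
  moreover have "xs \<noteq> [u]"
    using path by (auto elim!: rtrancl_path.cases simp: insert_commute)
  moreover have "last xs = u"
    using rtrancl_path_last[OF path] \<open>xs \<noteq> []\<close> .
  ultimately have len: "2 \<le> length xs"
    by (cases xs) (auto simp: Suc_le_eq)
  have "rtrancl_path (\<lambda>x y. {x, y} \<in> F) v xs u"
    using path by (rule rtrancl_path_mono) simp
  from is_cycle_closing_path[OF G F this dist len \<open>{u, v} \<in> F\<close>] that show ?thesis
    by blast
qed

section \<open>Components and pseudoforests\<close>

lemma adj_rtranclp_eq_linked: "(adj G)\<^sup>*\<^sup>* = linked (edges G)"
  by (simp add: linked_def adj_def[abs_def])

lemma reachable_iff_linked: "reachable G v u \<longleftrightarrow> v \<in> verts G \<and> linked (edges G) v u"
  by (simp add: reachable_def adj_rtranclp_eq_linked)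

lemma reachable_in_verts:
  assumes G: "simple_graph G" and "reachable G v u"
  shows "u \<in> verts G"
proof -
  have "(adj G)\<^sup>*\<^sup>* v u" "v \<in> verts G"
    using assms(2) by (auto simp: reachable_def)
  then show ?thesis
    using G by (induction rule: rtranclp_induct) (auto simp: adj_def simple_graph_def)
qed

lemma verts_component: "verts (component G v) = {u. reachable G v u}"
  by (simp add: component_def induced_def verts_def)

lemma edges_component: "edges (component G v) = {e \<in> edges G. e \<subseteq> {u. reachable G v u}}"
  by (simp add: component_def induced_def edges_def verts_def)

lemma is_cycle_component_iff:
  assumes G: "simple_graph G"
  shows "is_cycle (component G v) vs \<longleftrightarrow> is_cycle G vs \<and> set vs \<subseteq> {u. reachable G v u}"
proof
  show "is_cycle G vs \<and> set vs \<subseteq> {u. reachable G v u}" if "is_cycle (component G v) vs"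
    using that reachable_in_verts[OF G]
    unfolding is_cycle_def adj_def verts_component edges_component by auto
next
  assume cycle: "is_cycle G vs \<and> set vs \<subseteq> {u. reachable G v u}"
  have "vs ! ((i + 1) mod length vs) \<in> set vs" if "i < length vs" for i
    using that by (intro nth_mem mod_less_divisor) linarith
  with cycle show "is_cycle (component G v) vs"
    unfolding is_cycle_def adj_def verts_component edges_component by (auto dest: nth_mem)
qed

lemma connected_component:
  assumes G: "simple_graph G" and v: "v \<in> verts G"
  shows "connected_graph (component G v)"
proof -
  let ?C = "component G v"
  have from_v: "linked (edges ?C) v w" if "(adj G)\<^sup>*\<^sup>* v w" for w
    using that
  proof (induction rule: rtranclp_induct)
    case (step y z)
    then have "{y, z} \<in> edges ?C"
      using v by (auto simp: adj_def reachable_def edges_component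
          intro: rtranclp.rtrancl_into_rtrancl)
    with step.IH show ?case
      by (meson linked_edge linked_trans)
  qed simp
  show ?thesis
    unfolding connected_graph_def
  proof (intro conjI ballI)
    show "verts ?C \<noteq> {}"
      using v by (auto simp: verts_component reachable_def)
    fix x y
    assume "x \<in> verts ?C" "y \<in> verts ?C"
    then have "(adj G)\<^sup>*\<^sup>* v x" "(adj G)\<^sup>*\<^sup>* v y"
      by (auto simp: verts_component reachable_def)
    then have "linked (edges ?C) v x" "linked (edges ?C) v y"
      by (auto intro: from_v)
    then have "linked (edges ?C) x y"
      using linked_sym linked_trans by metis
    with \<open>x \<in> verts ?C\<close> show "reachable ?C x y"
      by (simp add: reachable_def adj_rtranclp_eq_linked)
  qed
qed

lemma tree_or_unicyclic_iff:
  "is_tree C \<or> unicyclic C \<longleftrightarrow>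
     connected_graph C \<and> (\<forall>X \<in> cycles_of C. \<forall>Y \<in> cycles_of C. X = Y)"
proof (cases "cycles_of C = {}")
  case False
  then obtain X where "X \<in> cycles_of C"
    by blast
  then have "(\<forall>X \<in> cycles_of C. \<forall>Y \<in> cycles_of C. X = Y) \<longleftrightarrow> card (cycles_of C) = 1"
    by (auto simp: card_1_singleton_iff)
  with False show ?thesis
    by (auto simp: is_tree_def unicyclic_def)
qed (simp add: is_tree_def unicyclic_def)

lemma cycle_in_component:
  assumes cycle: "is_cycle G vs" and x: "x \<in> set vs"
    and v: "v \<in> verts G" "linked (edges G) v x"
  shows "set vs \<subseteq> {u. reachable G v u}"
proof
  fix w
  assume "w \<in> set vs"
  with cycle x have "linked (cycle_edges vs) x w"
    by (rule linked_cycle_vertices)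
  then have "linked (edges G) x w"
    using cycle_edges_subset[OF cycle] by (rule linked_mono)
  with v have "linked (edges G) v w"
    by (blast intro: linked_trans[OF v(2)])
  with v(1) show "w \<in> {u. reachable G v u}"
    by (simp add: reachable_iff_linked)
qed

lemma pseudoforest_cycle_edges_eq:
  assumes pf: "pseudoforest G" and cycles: "is_cycle G vs1" "is_cycle G vs2"
    and xy: "x \<in> set vs1" "y \<in> set vs2" "linked (edges G) x y"
  shows "cycle_edges vs1 = cycle_edges vs2"
proof -
  have x: "x \<in> verts G"
    using cycles(1) xy(1) by (auto simp: is_cycle_def)
  have "is_cycle (component G x) vs1" "is_cycle (component G x) vs2"
    using pf cycle_in_component[OF cycles(1) xy(1) x] cycle_in_component[OF cycles(2) xy(2) x xy(3)]
      cycles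
    by (simp_all add: pseudoforest_def is_cycle_component_iff)
  moreover have "is_tree (component G x) \<or> unicyclic (component G x)"
    using pf x by (simp add: pseudoforest_def)
  ultimately show ?thesis
    by (auto simp: tree_or_unicyclic_iff cycles_of_def)
qed

lemma pseudoforestI:
  assumes G: "simple_graph G"
    and cycles: "\<And>vs1 vs2 x y. is_cycle G vs1 \<Longrightarrow> is_cycle G vs2 \<Longrightarrow>
      x \<in> set vs1 \<Longrightarrow> y \<in> set vs2 \<Longrightarrow> linked (edges G) x y \<Longrightarrow>
      cycle_edges vs1 \<subseteq> cycle_edges vs2"
  shows "pseudoforest G"
  unfolding pseudoforest_def
proof (intro conjI ballI)
  fix v
  assume v: "v \<in> verts G"
  have "X = Y" if XY_cycles: "X \<in> cycles_of (component G v)" "Y \<in> cycles_of (component G v)"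
    for X Y
  proof -
    obtain vs1 vs2 where XY: "X = cycle_edges vs1" "Y = cycle_edges vs2"
      and "is_cycle (component G v) vs1" "is_cycle (component G v) vs2"
      using XY_cycles unfolding cycles_of_def by blast
    then have cyc: "is_cycle G vs1" "is_cycle G vs2"
      and reach: "set vs1 \<subseteq> {u. reachable G v u}" "set vs2 \<subseteq> {u. reachable G v u}"
      by (simp_all add: is_cycle_component_iff[OF G])
    have "vs1 \<noteq> []" "vs2 \<noteq> []"
      using cyc by (auto simp: is_cycle_def)
    then have xy: "hd vs1 \<in> set vs1" "hd vs2 \<in> set vs2"
      by simp_all
    with reach have "linked (edges G) v (hd vs1)" "linked (edges G) v (hd vs2)"
      by (auto simp: reachable_iff_linked)
    then have "linked (edges G) (hd vs1) (hd vs2)" "linked (edges G) (hd vs2) (hd vs1)"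
      by (meson linked_sym linked_trans)+
    with cycles[OF cyc xy] cycles[OF cyc(2,1) xy(2,1)] show "X = Y"
      unfolding XY by blast
  qed
  then show "is_tree (component G v) \<or> unicyclic (component G v)"
    using connected_component[OF G v] by (simp add: tree_or_unicyclic_iff)
qed (rule G)

lemma pseudoforest_edges_if_pseudoforest:
  assumes pf: "pseudoforest G"
  shows "pseudoforest_edges (edges G)"
  unfolding pseudoforest_edges_def acyclic_at_def
proof (intro allI impI notI)
  fix s t p q
  assume st: "on_cycle (edges G) s t" and sp: "linked (edges G - {{s, t}}) s p"
    and pq: "on_cycle (edges G - {{s, t}}) p q"
  have G: "simple_graph G"
    using pf by (simp add: pseudoforest_def)
  obtain vs1 where vs1: "is_cycle G vs1" "{s, t} \<in> cycle_edges vs1"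
    using cycle_through_on_cycle[OF G order_refl st] by blast
  obtain vs2 where vs2: "is_cycle G vs2" "{p, q} \<in> cycle_edges vs2"
    and avoid: "cycle_edges vs2 \<subseteq> edges G - {{s, t}}"
    using cycle_through_on_cycle[OF G _ pq] by blast
  have "s \<in> set vs1" "p \<in> set vs2"
    using vs1 vs2 by (auto simp flip: Union_cycle_edges)
  moreover have "linked (edges G) s p"
    using sp by (rule linked_mono) blast
  ultimately have "cycle_edges vs1 = cycle_edges vs2"
    using pseudoforest_cycle_edges_eq[OF pf vs1(1) vs2(1)] by blast
  with vs1(2) avoid show False
    by blast
qed

lemma pseudoforest_if_pseudoforest_edges:
  assumes G: "simple_graph G" and PF: "pseudoforest_edges (edges G)"
  shows "pseudoforest G"
proof (rule pseudoforestI[OF G], rule subsetI, rule ccontr)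
  fix vs1 vs2 x y f
  assume cycles: "is_cycle G vs1" "is_cycle G vs2"
    and xy: "x \<in> set vs1" "y \<in> set vs2" "linked (edges G) x y"
    and f: "f \<in> cycle_edges vs1" "f \<notin> cycle_edges vs2"
  obtain s t where f_st: "f = {s, t}" and s: "s \<in> set vs1" and st: "on_cycle (edges G) s t"
    using cycle_edge_on_cycle[OF cycles(1) f(1) cycle_edges_subset[OF cycles(1)]] .
  have "3 \<le> length vs2"
    using cycles(2) by (simp add: is_cycle_def)
  then have "{vs2 ! 0, vs2 ! ((0 + 1) mod length vs2)} \<in> cycle_edges vs2"
    by (intro cycle_edge_in_cycle_edges) linarith
  moreover have "cycle_edges vs2 \<subseteq> edges G - {f}"
    using cycle_edges_subset[OF cycles(2)] f(2) by blast
  ultimately obtain p q where p: "p \<in> set vs2" and pq: "on_cycle (edges G - {f}) p q"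
    using cycle_edge_on_cycle[OF cycles(2)] by metis
  have "linked (edges G) s x"
    using linked_cycle_vertices[OF cycles(1) s xy(1)] cycle_edges_subset[OF cycles(1)]
    by (rule linked_mono)
  moreover have "linked (edges G) y p"
    using linked_cycle_vertices[OF cycles(2) xy(2) p] cycle_edges_subset[OF cycles(2)]
    by (rule linked_mono)
  ultimately have "linked (edges G) s p"
    using xy(3) by (meson linked_trans)
  with pseudoforest_edges_not_linked[OF PF st] pq f_st show False
    by blast
qed

lemma pseudoforest_iff_edges:
  "pseudoforest G \<longleftrightarrow> simple_graph G \<and> pseudoforest_edges (edges G)"
proof
  assume "pseudoforest G"
  then show "simple_graph G \<and> pseudoforest_edges (edges G)"
    by (simp add: pseudoforest_def pseudoforest_edges_if_pseudoforest)
qed (blast intro: pseudoforest_if_pseudoforest_edges)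

lemma on_cycle_if_Cycles_edge:
  assumes pf: "pseudoforest G" and cd: "{c, d} \<in> edges (Cycles G)"
  shows "on_cycle (edges G) c d"
proof -
  have G: "simple_graph G"
    using pf by (simp add: pseudoforest_def)
  obtain vs1 vs2 where vs1: "is_cycle G vs1" "c \<in> set vs1" and vs2: "is_cycle G vs2" "d \<in> set vs2"
    and cd_G: "{c, d} \<in> edges G"
    using cd by (auto simp: Cycles_def induced_def edges_def)
  have "c \<noteq> d"
    using G cd_G by (auto simp: simple_graph_def)
  have "cycle_edges vs1 = cycle_edges vs2"
    using pseudoforest_cycle_edges_eq[OF pf vs1(1) vs2(1) vs1(2) vs2(2) linked_edge[OF cd_G]] .
  then have "d \<in> set vs1"
    using vs2(2) by (simp add: Union_cycle_edges[OF vs1(1), symmetric] Union_cycle_edges[OF vs2(1)])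
  show ?thesis
  proof (cases "{c, d} \<in> cycle_edges vs1")
    case True
    then obtain s t where "{c, d} = {s, t}" "on_cycle (edges G) s t"
      using cycle_edge_on_cycle[OF vs1(1) _ cycle_edges_subset[OF vs1(1)]] by metis
    then show ?thesis
      by (auto simp: doubleton_eq_iff dest: on_cycle_sym)
  next
    case False
    have "linked (cycle_edges vs1) c d"
      using linked_cycle_vertices[OF vs1(1) vs1(2) \<open>d \<in> set vs1\<close>] .
    moreover have "cycle_edges vs1 \<subseteq> edges G - {{c, d}}"
      using cycle_edges_subset[OF vs1(1)] False by blast
    ultimately have "linked (edges G - {{c, d}}) c d"
      by (rule linked_mono)
    with \<open>c \<noteq> d\<close> cd_G show ?thesis
      by (simp add: on_cycle_def)
  qed
qed

lemma simple_graph_two_switch: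
  assumes "simple_graph G"
  shows "simple_graph (two_switch a b c d G)"
proof (cases "interchangeable G a b c d")
  case True
  then have "{a, b} \<in> edges G" "{c, d} \<in> edges G" "{a, b} \<inter> {c, d} = {}"
    by (simp_all add: interchangeable_def)
  with assms show ?thesis
    by (auto simp: two_switch_def simple_graph_def verts_def edges_def card_insert_if)
qed (simp add: two_switch_def assms)

theorem lemma4p5:
  fixes G :: "'a graph" and a b c d :: 'a
  assumes "pseudoforest G"
    and "interchangeable G a b c d"
    and "({a, b} \<in> edges (Forest G) \<and> {c, d} \<in> edges (Cycles G)) \<or>
         ({a, b} \<in> edges (Cycles G) \<and> {c, d} \<in> edges (Cycles G))"
  shows "p_switch G a b c d"
proof -
  have G: "simple_graph G" and PF: "pseudoforest_edges (edges G)"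
    using assms(1) by (simp_all add: pseudoforest_iff_edges)
  have cd: "on_cycle (edges G) c d"
    using on_cycle_if_Cycles_edge[OF assms(1)] assms(3) by blast
  have ab: "{a, b} \<in> edges G" "a \<noteq> b" "{a, b} \<noteq> {c, d}"
    using assms(2) G by (auto simp: interchangeable_def simple_graph_def)
  have "edges (two_switch a b c d G) = (edges G - {{a, b}, {c, d}}) \<union> {{a, c}, {b, d}}"
    using assms(2) by (simp add: two_switch_def edges_def)
  then have "pseudoforest (two_switch a b c d G)"
    using pseudoforest_edges_switch[OF PF cd ab] simple_graph_two_switch[OF G]
    by (simp only: pseudoforest_iff_edges)
  with assms(1,2) show ?thesis
    by (simp add: p_switch_def)
qed

end
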